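(* Let $\|\cdot\|$ be a norm on $\mathbb{R}^n$ whose dual norm $\|\cdot\|^*$ is an algebra norm. Let $a<b$ and let $f\in\mathbb{R}^n$ take values in $[a,b]$. Let $\eta:\mathbb{R}_+\to\mathbb{R}_+$ be a positive decreasing function and let $\epsilon>0$. Then there is a constant $C_0$, depending on $\eta$ and $\epsilon$ only, such that $f$ can be written as $f=f_1+f_2+f_3$ with $\|f_1\|^*\le C_0$, $\|f_2\|\le\eta(\|f_1\|^* )$ and $\|f_3\|_2\le\epsilon$, and such that both $f_1$ and $f_1+f_3$ take values in $[a,b]$.
   Context: Functions in $\mathbb{R}^n$ are functions on $\{1,\dots,n\}$, with $\langle f,g\rangle=\frac1n\sum_xf(x)g(x)$ and $\|f\|_2=(\frac1n\sum_x f(x)^2)^{1/2}$. The dual norm of $\|\cdot\|$ is $\|\phi\|^*=\max\{\langle f,\phi\rangle:\|f\|\le1\}$. An algebra norm on $\mathbb{R}^n$ is a norm $|\cdot|$ such that $|fg|\le|f||g|$ for all $f,g$ (pointwise product) and $|\mathbf 1|=1$, where $\mathbf 1$ is the constant function $1$. *)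

theory Defs
  imports Complex_Main
begin

text \<open>Vectors of R^n are represented as functions nat => real supported on {0..<n}
  (index set {0,...,n-1} instead of {1,...,n}).\<close>

definition vecs :: "nat \<Rightarrow> (nat \<Rightarrow> real) set" where
  "vecs n = {f. \<forall>i\<ge>n. f i = 0}"

definition ip :: "nat \<Rightarrow> (nat \<Rightarrow> real) \<Rightarrow> (nat \<Rightarrow> real) \<Rightarrow> real" where
  "ip n f g = (\<Sum>i<n. f i * g i) / real n"

definition l2norm :: "nat \<Rightarrow> (nat \<Rightarrow> real) \<Rightarrow> real" where
  "l2norm n f = sqrt (\<Sum>i<n. (f i)^2 / real n)"

definition one_vec :: "nat \<Rightarrow> nat \<Rightarrow> real" where
  "one_vec n = (\<lambda>i. if i < n then 1 else 0)"

definition pmult :: "(nat \<Rightarrow> real) \<Rightarrow> (nat \<Rightarrow> real) \<Rightarrow> nat \<Rightarrow> real" where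
  "pmult f g = (\<lambda>i. f i * g i)"

definition is_norm_on :: "nat \<Rightarrow> ((nat \<Rightarrow> real) \<Rightarrow> real) \<Rightarrow> bool" where
  "is_norm_on n N \<longleftrightarrow>
     (\<forall>f\<in>vecs n. 0 \<le> N f) \<and>
     (\<forall>f\<in>vecs n. N f = 0 \<longleftrightarrow> f = (\<lambda>_. 0)) \<and>
     (\<forall>f\<in>vecs n. \<forall>c. N (\<lambda>i. c * f i) = \<bar>c\<bar> * N f) \<and>
     (\<forall>f\<in>vecs n. \<forall>g\<in>vecs n. N (\<lambda>i. f i + g i) \<le> N f + N g)"

definition dual_norm :: "nat \<Rightarrow> ((nat \<Rightarrow> real) \<Rightarrow> real) \<Rightarrow> (nat \<Rightarrow> real) \<Rightarrow> real" where
  "dual_norm n N \<phi> = Sup {ip n f \<phi> | f. f \<in> vecs n \<and> N f \<le> 1}"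

definition is_algebra_norm_on :: "nat \<Rightarrow> ((nat \<Rightarrow> real) \<Rightarrow> real) \<Rightarrow> bool" where
  "is_algebra_norm_on n M \<longleftrightarrow> is_norm_on n M \<and>
     (\<forall>f\<in>vecs n. \<forall>g\<in>vecs n. M (pmult f g) \<le> M f * M g) \<and>
     M (one_vec n) = 1"

end

theory Submission
  imports Defs "HOL-Analysis.Analysis"
begin

text \<open>Put \<open>psi x = -sqrt ((x - a) * (b - x))\<close>, let \<open>Psi u\<close> be the average of \<open>psi\<close> over the
  coordinates of \<open>u\<close>, and for a scale \<open>lam\<close> minimise the energy \<open>lam * N (f - u) + Psi u\<close> over
  \<open>u \<in> [a, b]\<^sup>n\<close>. Since \<open>psi'\<close> is infinite at \<open>a\<close> and \<open>b\<close>, a minimiser \<open>u\<close> is interior, and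
  first-order optimality bounds the dual norm of its gradient \<open>g = psi' \<circ> u\<close> by \<open>lam\<close>. As
  \<open>u = (psi')\<inverse> \<circ> g\<close> and \<open>(psi')\<inverse>\<close> is uniformly approximable on \<open>[-lam, lam]\<close> by polynomials \<open>p\<close>
  with values in \<open>[a, b]\<close>, the algebra property bounds the dual norm of \<open>f1 = p \<circ> g\<close> in terms of
  \<open>lam\<close> only. Comparing the energy of the minimiser \<open>w\<close> at a larger scale \<open>mu\<close> with that of \<open>f\<close>
  gives \<open>N (f - w) \<le> (b - a) / (2 * mu)\<close>, and uniform convexity of \<open>Psi\<close> bounds \<open>\<parallel>w - u\<parallel>\<^sub>2\<^sup>2\<close>
  by \<open>2 (b - a) (Psi w - Psi u)\<close>. Along suitably growing scales the increments of \<open>Psi\<close> sum to at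
  most \<open>(b - a) / 2\<close>, so one of the first \<open>K\<close> is small; then take \<open>f2 = f - w\<close> and \<open>f3 = w - f1\<close>.\<close>

section \<open>Vectors, norms and algebra norms\<close>

definition unit_vec :: "nat \<Rightarrow> nat \<Rightarrow> real" where
  "unit_vec i = (\<lambda>j. if j = i then 1 else 0)"

lemma vecs_zero [simp]: "(\<lambda>_. 0) \<in> vecs n"
  by (simp add: vecs_def)

lemma vecs_diff [intro]: "f \<in> vecs n \<Longrightarrow> g \<in> vecs n \<Longrightarrow> (\<lambda>i. f i - g i) \<in> vecs n"
  by (simp add: vecs_def)

lemma vecs_scale [intro]: "f \<in> vecs n \<Longrightarrow> (\<lambda>i. c * f i) \<in> vecs n"
  by (simp add: vecs_def)

lemma vecs_minus [intro]: "f \<in> vecs n \<Longrightarrow> (\<lambda>i. - f i) \<in> vecs n"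
  by (simp add: vecs_def)

lemma vecs_sum [intro]: "(\<And>k. k \<in> I \<Longrightarrow> v k \<in> vecs n) \<Longrightarrow> (\<lambda>j. \<Sum>k\<in>I. v k j) \<in> vecs n"
  by (simp add: vecs_def)

lemma vecs_unit_vec [intro]: "i < n \<Longrightarrow> unit_vec i \<in> vecs n"
  by (simp add: vecs_def unit_vec_def)

lemma vecs_eq_sum_unit_vec: "x \<in> vecs n \<Longrightarrow> x = (\<lambda>j. \<Sum>i<n. x i * unit_vec i j)"
  by (auto simp: vecs_def unit_vec_def fun_eq_iff if_distrib cong: if_cong)

lemma continuous_on_coordinate [continuous_intros]: "continuous_on S (\<lambda>u::nat\<Rightarrow>real. u i)"
  by (rule continuous_on_subset[OF continuous_on_product_coordinates subset_UNIV])

locale vec_norm =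
  fixes n :: nat and N :: "(nat \<Rightarrow> real) \<Rightarrow> real"
  assumes is_norm: "is_norm_on n N"
begin

lemma N_nonneg: "f \<in> vecs n \<Longrightarrow> 0 \<le> N f"
  using is_norm by (simp add: is_norm_on_def)

lemma N_eq_0_iff: "f \<in> vecs n \<Longrightarrow> N f = 0 \<longleftrightarrow> f = (\<lambda>_. 0)"
  using is_norm by (simp add: is_norm_on_def)

lemma N_zero [simp]: "N (\<lambda>_. 0) = 0"
  using N_eq_0_iff[of "\<lambda>_. 0"] by simp

lemma N_scale: "f \<in> vecs n \<Longrightarrow> N (\<lambda>i. c * f i) = \<bar>c\<bar> * N f"
  using is_norm by (simp add: is_norm_on_def)

lemma N_triangle: "f \<in> vecs n \<Longrightarrow> g \<in> vecs n \<Longrightarrow> N (\<lambda>i. f i + g i) \<le> N f + N g"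
  using is_norm by (simp add: is_norm_on_def)

lemma N_minus: "f \<in> vecs n \<Longrightarrow> N (\<lambda>i. - f i) = N f"
  using N_scale[of f "-1"] by simp

lemma N_diff_le: "f \<in> vecs n \<Longrightarrow> g \<in> vecs n \<Longrightarrow> N (\<lambda>i. f i - g i) \<le> N f + N g"
  using N_triangle[of f "\<lambda>i. - g i"] N_minus[of g] by auto

lemma N_sum_le:
  "finite I \<Longrightarrow> (\<And>k. k \<in> I \<Longrightarrow> v k \<in> vecs n) \<Longrightarrow> N (\<lambda>j. \<Sum>k\<in>I. v k j) \<le> (\<Sum>k\<in>I. N (v k))"
proof (induction I rule: finite_induct)
  case (insert x F)
  have "N (\<lambda>j. \<Sum>k\<in>insert x F. v k j) = N (\<lambda>j. v x j + (\<Sum>k\<in>F. v k j))"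
    using insert by simp
  also have "\<dots> \<le> N (v x) + N (\<lambda>j. \<Sum>k\<in>F. v k j)"
    using insert by (intro N_triangle) auto
  also have "\<dots> \<le> N (v x) + (\<Sum>k\<in>F. N (v k))"
    using insert by auto
  finally show ?case
    using insert by simp
qed simp

lemma N_convex_comb:
  assumes "f \<in> vecs n" "g \<in> vecs n" "0 \<le> s" "0 \<le> t"
  shows "N (\<lambda>i. s * f i + t * g i) \<le> s * N f + t * N g"
  using N_triangle[of "\<lambda>i. s * f i" "\<lambda>i. t * g i"] N_scale[of f s] N_scale[of g t] assms by auto

lemma N_le_sum_coords:
  assumes x: "x \<in> vecs n"
  shows "N x \<le> (\<Sum>i<n. \<bar>x i\<bar> * N (unit_vec i))"
proof -
  have "N x = N (\<lambda>j. \<Sum>i<n. x i * unit_vec i j)"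
    using vecs_eq_sum_unit_vec[OF x] by simp
  also have "\<dots> \<le> (\<Sum>i<n. N (\<lambda>j. x i * unit_vec i j))"
    by (rule N_sum_le) auto
  also have "\<dots> = (\<Sum>i<n. \<bar>x i\<bar> * N (unit_vec i))"
    by (intro sum.cong refl N_scale) auto
  finally show ?thesis .
qed

lemma N_unit_vec_pos:
  assumes "i < n"
  shows "0 < N (unit_vec i)"
proof -
  have "unit_vec i \<noteq> (\<lambda>_. 0)"
    by (auto simp: unit_vec_def fun_eq_iff)
  then show ?thesis
    using N_eq_0_iff N_nonneg vecs_unit_vec[OF assms] by (simp add: order_less_le)
qed

lemma continuous_on_N_residual:
  assumes f: "f \<in> vecs n"
  shows "continuous_on (vecs n) (\<lambda>u. N (\<lambda>i. f i - u i))"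
  unfolding continuous_on_def
proof
  fix x assume x: "x \<in> vecs n"
  define h where "h = (\<lambda>u. N (\<lambda>i. f i - u i))"
  define g where "g = (\<lambda>u::nat\<Rightarrow>real. \<Sum>i<n. \<bar>u i - x i\<bar> * N (unit_vec i))"
  have "continuous_on UNIV g"
    unfolding g_def by (intro continuous_intros)
  then have "(g \<longlongrightarrow> g x) (at x within vecs n)"
    by (metis continuous_on_def tendsto_within_subset subset_UNIV UNIV_I)
  then have g0: "(g \<longlongrightarrow> 0) (at x within vecs n)"
    by (simp add: g_def)
  have bound: "norm (h u - h x) \<le> g u" if u: "u \<in> vecs n" for u
  proof -
    have fu: "(\<lambda>i. f i - u i) \<in> vecs n" and fx: "(\<lambda>i. f i - x i) \<in> vecs n"
      and xu: "(\<lambda>i. x i - u i) \<in> vecs n" and ux: "(\<lambda>i. u i - x i) \<in> vecs n"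
      using f x u by auto
    have "h u \<le> h x + N (\<lambda>i. x i - u i)"
      using N_triangle[OF fx xu] unfolding h_def by simp
    moreover have "h x \<le> h u + N (\<lambda>i. u i - x i)"
      using N_triangle[OF fu ux] unfolding h_def by simp
    moreover have "N (\<lambda>i. x i - u i) = N (\<lambda>i. u i - x i)"
      using N_minus[OF ux] by simp
    moreover have "N (\<lambda>i. u i - x i) \<le> g u"
      using N_le_sum_coords[OF ux] unfolding g_def by simp
    ultimately show ?thesis by auto
  qed
  have "((\<lambda>u. h u - h x) \<longlongrightarrow> 0) (at x within vecs n)"
  proof (rule Lim_null_comparison[OF _ g0])
    show "\<forall>\<^sub>F u in at x within vecs n. norm (h u - h x) \<le> g u"
      unfolding eventually_at_filter by (rule always_eventually) (use bound in auto)
  qed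
  then show "(h \<longlongrightarrow> h x) (at x within vecs n)"
    by (rule LIM_zero_cancel)
qed

end

definition vec_power :: "nat \<Rightarrow> (nat \<Rightarrow> real) \<Rightarrow> nat \<Rightarrow> nat \<Rightarrow> real" where
  "vec_power n g i = (\<lambda>j. if j < n then g j ^ i else 0)"

definition vec_poly :: "nat \<Rightarrow> (nat \<Rightarrow> real) \<Rightarrow> nat \<Rightarrow> (nat \<Rightarrow> real) \<Rightarrow> nat \<Rightarrow> real" where
  "vec_poly n q k g = (\<lambda>j. \<Sum>i\<le>k. q i * vec_power n g i j)"

lemma vecs_vec_power [intro]: "vec_power n g i \<in> vecs n"
  by (simp add: vec_power_def vecs_def)

lemma vecs_vec_poly [intro]: "vec_poly n q k g \<in> vecs n"
  by (simp add: vec_poly_def vec_power_def vecs_def)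

lemma vec_poly_apply: "j < n \<Longrightarrow> vec_poly n q k g j = (\<Sum>i\<le>k. q i * g j ^ i)"
  by (simp add: vec_poly_def vec_power_def)

lemma vec_power_0: "vec_power n g 0 = one_vec n"
  by (simp add: vec_power_def Defs.one_vec_def fun_eq_iff)

lemma vec_power_Suc: "g \<in> vecs n \<Longrightarrow> vec_power n g (Suc i) = pmult g (vec_power n g i)"
  by (auto simp: vec_power_def pmult_def vecs_def fun_eq_iff)

locale algebra_norm =
  fixes n :: nat and N :: "(nat \<Rightarrow> real) \<Rightarrow> real"
  assumes is_algebra_norm: "is_algebra_norm_on n N"
begin

sublocale vec_norm n N
  using is_algebra_norm by unfold_locales (simp add: is_algebra_norm_on_def)

lemma N_pmult_le: "f \<in> vecs n \<Longrightarrow> g \<in> vecs n \<Longrightarrow> N (pmult f g) \<le> N f * N g"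
  using is_algebra_norm by (simp add: is_algebra_norm_on_def)

lemma N_one_vec: "N (one_vec n) = 1"
  using is_algebra_norm by (simp add: is_algebra_norm_on_def)

lemma N_vec_power_le: "g \<in> vecs n \<Longrightarrow> N (vec_power n g i) \<le> N g ^ i"
proof (induction i)
  case 0
  then show ?case by (simp add: vec_power_0 N_one_vec)
next
  case (Suc i)
  have "N (vec_power n g (Suc i)) \<le> N g * N (vec_power n g i)"
    using vec_power_Suc[OF Suc.prems] N_pmult_le[OF Suc.prems vecs_vec_power] by simp
  also have "\<dots> \<le> N g * N g ^ i"
    using Suc N_nonneg[OF Suc.prems] by (intro mult_left_mono) auto
  finally show ?case by simp
qed

lemma N_vec_poly_le:
  assumes g: "g \<in> vecs n"
  shows "N (vec_poly n q k g) \<le> (\<Sum>i\<le>k. \<bar>q i\<bar> * N g ^ i)"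
proof -
  have "N (vec_poly n q k g) \<le> (\<Sum>i\<le>k. N (\<lambda>j. q i * vec_power n g i j))"
    unfolding vec_poly_def by (rule N_sum_le) auto
  also have "\<dots> = (\<Sum>i\<le>k. \<bar>q i\<bar> * N (vec_power n g i))"
    by (intro sum.cong refl N_scale vecs_vec_power)
  also have "\<dots> \<le> (\<Sum>i\<le>k. \<bar>q i\<bar> * N g ^ i)"
    by (intro sum_mono mult_left_mono N_vec_power_le[OF g]) auto
  finally show ?thesis .
qed

lemma abs_coordinate_le:
  assumes g: "g \<in> vecs n" and i: "i < n"
  shows "\<bar>g i\<bar> \<le> N g"
proof -
  have "pmult (unit_vec i) g = (\<lambda>j. g i * unit_vec i j)"
    by (auto simp: pmult_def unit_vec_def fun_eq_iff)
  then have "\<bar>g i\<bar> * N (unit_vec i) \<le> N (unit_vec i) * N g"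
    using N_pmult_le[OF vecs_unit_vec[OF i] g] N_scale[OF vecs_unit_vec[OF i]] by simp
  then show ?thesis
    using N_unit_vec_pos[OF i] by (simp add: mult.commute)
qed

end

lemma l2norm_sq: "(l2norm n v)\<^sup>2 = (\<Sum>i<n. (v i)\<^sup>2) / real n"
  unfolding l2norm_def by (simp add: sum_nonneg sum_divide_distrib)

lemma l2norm_nonneg: "0 \<le> l2norm n v"
  unfolding l2norm_def by (simp add: sum_nonneg)

lemma l2norm_sq_diff_le:
  assumes "\<forall>i<n. \<bar>v i - u i\<bar> \<le> \<delta>"
  shows "(l2norm n (\<lambda>i. w i - v i))\<^sup>2 \<le> 2 * (l2norm n (\<lambda>i. w i - u i))\<^sup>2 + 2 * \<delta>\<^sup>2"
proof (cases "n = 0")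
  case False
  have "(w i - v i)\<^sup>2 \<le> 2 * (w i - u i)\<^sup>2 + 2 * \<delta>\<^sup>2" if i: "i < n" for i
  proof -
    have "(v i - u i)\<^sup>2 \<le> \<delta>\<^sup>2"
      using assms i by (simp add: abs_le_square_iff[symmetric] order_trans[OF _ abs_ge_self])
    moreover have "0 \<le> ((w i - u i) + (v i - u i))\<^sup>2"
      by simp
    ultimately show ?thesis
      by (simp add: power2_eq_square algebra_simps)
  qed
  then have "(\<Sum>i<n. (w i - v i)\<^sup>2) \<le> (\<Sum>i<n. 2 * (w i - u i)\<^sup>2 + 2 * \<delta>\<^sup>2)"
    by (intro sum_mono) auto
  then have "(\<Sum>i<n. (w i - v i)\<^sup>2) / real n \<le> (\<Sum>i<n. 2 * (w i - u i)\<^sup>2 + 2 * \<delta>\<^sup>2) / real n"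
    by (intro divide_right_mono) auto
  then show ?thesis
    using False unfolding l2norm_sq
    by (simp add: sum.distrib sum_distrib_left[symmetric] add_divide_distrib)
qed (simp add: l2norm_def)

section \<open>The semicircle potential\<close>

text \<open>\<open>psi a b\<close> is the lower half of the circle over \<open>[a, b]\<close>: a uniformly convex function whose
  derivative \<open>psi_deriv a b\<close> blows up at both endpoints; \<open>psi_deriv_inv a b\<close> is the inverse of
  that derivative, a bounded continuous map from \<open>\<real>\<close> onto \<open>(a, b)\<close>.\<close>

definition psi :: "real \<Rightarrow> real \<Rightarrow> real \<Rightarrow> real" where
  "psi a b x = - sqrt ((x - a) * (b - x))"

definition psi_deriv :: "real \<Rightarrow> real \<Rightarrow> real \<Rightarrow> real" where
  "psi_deriv a b x = (x - (a + b) / 2) / sqrt ((x - a) * (b - x))"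

definition psi_deriv_inv :: "real \<Rightarrow> real \<Rightarrow> real \<Rightarrow> real" where
  "psi_deriv_inv a b y = (a + b) / 2 + (b - a) / 2 * (y / sqrt (1 + y\<^sup>2))"

lemma interval_product_eq: "(x - a) * (b - x) = ((b - a) / 2)\<^sup>2 - (x - (a + b) / 2)\<^sup>2"
  for a b x :: real
  by (simp add: power2_eq_square field_simps)

lemma sqrt_diff_squares_mult_le:
  fixes r z w :: real
  assumes "\<bar>z\<bar> \<le> r" "\<bar>w\<bar> \<le> r"
  shows "sqrt (r\<^sup>2 - z\<^sup>2) * sqrt (r\<^sup>2 - w\<^sup>2) \<le> r\<^sup>2 - w * z"
proof -
  have wz: "\<bar>w * z\<bar> \<le> r * r"
    using assms by (simp add: abs_mult mult_mono)
  have "(r\<^sup>2 - w * z)\<^sup>2 - (r\<^sup>2 - z\<^sup>2) * (r\<^sup>2 - w\<^sup>2) = r\<^sup>2 * (z - w)\<^sup>2"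
    by (simp add: power2_eq_square algebra_simps)
  moreover have "0 \<le> r\<^sup>2 * (z - w)\<^sup>2"
    by simp
  ultimately have "(r\<^sup>2 - z\<^sup>2) * (r\<^sup>2 - w\<^sup>2) \<le> (r\<^sup>2 - w * z)\<^sup>2"
    by linarith
  then have "sqrt ((r\<^sup>2 - z\<^sup>2) * (r\<^sup>2 - w\<^sup>2)) \<le> sqrt ((r\<^sup>2 - w * z)\<^sup>2)"
    by (rule real_sqrt_le_mono)
  also have "\<dots> = r\<^sup>2 - w * z"
    using wz by (simp add: power2_eq_square)
  finally show ?thesis
    by (simp add: real_sqrt_mult)
qed

lemma continuous_on_psi_deriv_inv: "continuous_on S (psi_deriv_inv a b)"
proof -
  have "sqrt (1 + y\<^sup>2) \<noteq> 0" for y :: real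
    using add_pos_nonneg[OF zero_less_one zero_le_power2[of y]] by simp
  then show ?thesis
    unfolding psi_deriv_inv_def by (intro continuous_intros) auto
qed

context
  fixes a b :: real
  assumes ab: "a < b"
begin

lemma psi_bounds:
  assumes "a \<le> x" "x \<le> b"
  shows "- ((b - a) / 2) \<le> psi a b x \<and> psi a b x \<le> 0"
proof -
  have "(x - a) * (b - x) \<le> ((b - a) / 2)\<^sup>2"
    using interval_product_eq[of x a b] by simp
  then have "sqrt ((x - a) * (b - x)) \<le> sqrt (((b - a) / 2)\<^sup>2)"
    by (rule real_sqrt_le_mono)
  then show ?thesis
    using assms ab by (simp add: psi_def)
qed

lemma psi_tangent_le:
  assumes x: "a \<le> x" "x \<le> b" and y: "a < y" "y < b"
  shows "psi a b y + psi_deriv a b y * (x - y) \<le> psi a b x"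
proof -
  define r where "r = (b - a) / 2"
  define z where "z = x - (a + b) / 2"
  define w where "w = y - (a + b) / 2"
  have pz: "(x - a) * (b - x) = r\<^sup>2 - z\<^sup>2" and pw: "(y - a) * (b - y) = r\<^sup>2 - w\<^sup>2"
    unfolding r_def z_def w_def by (rule interval_product_eq)+
  define p where "p = sqrt (r\<^sup>2 - z\<^sup>2)"
  define q where "q = sqrt (r\<^sup>2 - w\<^sup>2)"
  have "0 < (y - a) * (b - y)"
    using y by simp
  then have q0: "0 < q" and qq: "q * q = r\<^sup>2 - w\<^sup>2"
    unfolding q_def using pw by simp_all
  have zr: "\<bar>z\<bar> \<le> r" "\<bar>w\<bar> \<le> r"
    using x y unfolding z_def w_def r_def by (simp_all add: abs_le_iff field_simps)
  have pq: "p * q \<le> r\<^sup>2 - w * z"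
    unfolding p_def q_def using sqrt_diff_squares_mult_le[OF zr] .
  have "psi a b y + psi_deriv a b y * (x - y) = - q + w * (z - w) / q"
    unfolding psi_def psi_deriv_def q_def pw z_def w_def by simp
  also have "\<dots> = (- (q * q) + w * (z - w)) / q"
    using q0 by (simp add: field_simps)
  also have "\<dots> \<le> - (p * q) / q"
    using q0 pq qq by (intro divide_right_mono) (auto simp: power2_eq_square algebra_simps)
  also have "\<dots> = psi a b x"
    using q0 unfolding psi_def p_def pz by simp
  finally show ?thesis .
qed

lemma psi_midpoint_le:
  assumes x: "a \<le> x" "x \<le> b" and y: "a \<le> y" "y \<le> b"
  shows "psi a b ((x + y) / 2) \<le> (psi a b x + psi a b y) / 2 - (x - y)\<^sup>2 / (4 * (b - a))"
proof -
  define r where "r = (b - a) / 2"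
  define z where "z = x - (a + b) / 2"
  define w where "w = y - (a + b) / 2"
  have r0: "0 < r"
    unfolding r_def using ab by simp
  have pz: "(x - a) * (b - x) = r\<^sup>2 - z\<^sup>2" and pw: "(y - a) * (b - y) = r\<^sup>2 - w\<^sup>2"
    unfolding r_def z_def w_def by (rule interval_product_eq)+
  have "((x + y) / 2 - a) * (b - (x + y) / 2) = r\<^sup>2 - ((x + y) / 2 - (a + b) / 2)\<^sup>2"
    unfolding r_def by (rule interval_product_eq)
  moreover have "(x + y) / 2 - (a + b) / 2 = (z + w) / 2"
    unfolding z_def w_def by (simp add: field_simps)
  ultimately have pm: "((x + y) / 2 - a) * (b - (x + y) / 2) = r\<^sup>2 - ((z + w) / 2)\<^sup>2"
    by simp
  have zr: "z\<^sup>2 \<le> r\<^sup>2" "w\<^sup>2 \<le> r\<^sup>2"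
    using x y r0 unfolding z_def w_def r_def by (simp_all add: power2_le_iff_abs_le abs_le_iff field_simps)
  define p where "p = sqrt (r\<^sup>2 - z\<^sup>2)"
  define q where "q = sqrt (r\<^sup>2 - w\<^sup>2)"
  have p0: "0 \<le> p" "0 \<le> q" and pp: "p\<^sup>2 = r\<^sup>2 - z\<^sup>2" and qq: "q\<^sup>2 = r\<^sup>2 - w\<^sup>2"
    unfolding p_def q_def using zr by simp_all
  \<comment> \<open>the midpoint value is \<open>-sqrt (A\<^sup>2 + E)\<close>, with \<open>-A\<close> the average of the two values\<close>
  define A where "A = (p + q) / 2"
  define E where "E = ((z - w)\<^sup>2 + (p - q)\<^sup>2) / 4"
  have A0: "0 \<le> A" and E0: "0 \<le> E"
    using p0 unfolding A_def E_def by simp_all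
  have eq: "r\<^sup>2 - ((z + w) / 2)\<^sup>2 = A\<^sup>2 + E"
    unfolding A_def E_def using pp qq by (simp add: power2_eq_square field_simps; linarith)
  define S where "S = sqrt (A\<^sup>2 + E)"
  have SS: "S\<^sup>2 = A\<^sup>2 + E" and S0: "0 \<le> S"
    unfolding S_def using A0 E0 by simp_all
  have "A\<^sup>2 + E \<le> r\<^sup>2"
    using eq zero_le_power2[of "(z + w) / 2"] by linarith
  then have "S \<le> sqrt (r\<^sup>2)"
    unfolding S_def by (rule real_sqrt_le_mono)
  then have Sr: "S \<le> r"
    using r0 by simp
  have AS: "A \<le> S"
    unfolding S_def using E0 A0 by (simp add: real_le_rsqrt)
  have "E = (S - A) * (S + A)"
    using SS by (simp add: power2_eq_square algebra_simps)
  also have "\<dots> \<le> (S - A) * (2 * r)"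
    using AS Sr A0 by (intro mult_left_mono) auto
  finally have "E / (2 * r) \<le> S - A"
    using r0 by (simp add: divide_le_eq)
  moreover have "(z - w)\<^sup>2 / (8 * r) \<le> E / (2 * r)"
    using r0 unfolding E_def by (simp add: divide_simps)
  ultimately have "- S \<le> - A - (z - w)\<^sup>2 / (8 * r)"
    by linarith
  moreover have "psi a b ((x + y) / 2) = - S"
    unfolding psi_def pm S_def eq ..
  moreover have "- A - (z - w)\<^sup>2 / (8 * r) = (psi a b x + psi a b y) / 2 - (x - y)\<^sup>2 / (4 * (b - a))"
    unfolding psi_def pz pw A_def p_def q_def r_def z_def w_def using ab
    by (simp add: field_simps power2_eq_square)
  ultimately show ?thesis
    by linarith
qed

lemma psi_deriv_inv_psi_deriv:
  assumes "a < x" "x < b"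
  shows "psi_deriv_inv a b (psi_deriv a b x) = x"
proof -
  define r where "r = (b - a) / 2"
  define z where "z = x - (a + b) / 2"
  have pz: "(x - a) * (b - x) = r\<^sup>2 - z\<^sup>2"
    unfolding r_def z_def by (rule interval_product_eq)
  have r0: "0 < r"
    unfolding r_def using ab by simp
  define p where "p = sqrt (r\<^sup>2 - z\<^sup>2)"
  have "0 < r\<^sup>2 - z\<^sup>2"
    using assms pz by (metis mult_pos_pos diff_gt_0_iff_gt)
  then have p0: "0 < p" and pp: "p\<^sup>2 = r\<^sup>2 - z\<^sup>2"
    unfolding p_def by simp_all
  have "1 + (z / p)\<^sup>2 = (r / p)\<^sup>2"
    using pp p0 by (simp add: field_simps power2_eq_square)
  then have s: "sqrt (1 + (z / p)\<^sup>2) = r / p"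
    using p0 r0 by simp
  have "psi_deriv a b x = z / p"
    unfolding psi_deriv_def pz p_def z_def by simp
  then have "psi_deriv_inv a b (psi_deriv a b x) = (a + b) / 2 + r * ((z / p) / sqrt (1 + (z / p)\<^sup>2))"
    unfolding psi_deriv_inv_def r_def by simp
  also have "\<dots> = (a + b) / 2 + r * ((z / p) / (r / p))"
    unfolding s ..
  also have "\<dots> = x"
    using p0 r0 unfolding z_def by simp
  finally show ?thesis .
qed

lemma psi_deriv_inv_bounds: "a < psi_deriv_inv a b y \<and> psi_deriv_inv a b y < b"
proof -
  define t where "t = y / sqrt (1 + y\<^sup>2)"
  have s0: "0 < sqrt (1 + y\<^sup>2)"
    by (simp add: add_pos_nonneg)
  have "\<bar>y\<bar> < sqrt (1 + y\<^sup>2)"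
    using real_less_rsqrt[of "\<bar>y\<bar>" "1 + y\<^sup>2"] by simp
  then have "\<bar>t\<bar> < 1"
    unfolding t_def using s0 by (simp add: divide_less_eq)
  define k where "k = (b - a) / 2 * t"
  have "\<bar>k\<bar> < (b - a) / 2"
    unfolding k_def using mult_strict_left_mono[of "\<bar>t\<bar>" 1 "(b - a) / 2"] ab \<open>\<bar>t\<bar> < 1\<close>
    by (simp add: abs_mult)
  then show ?thesis
    unfolding psi_deriv_inv_def t_def[symmetric] k_def[symmetric] abs_less_iff by (simp add: field_simps)
qed

lemma isCont_psi_deriv: "a < y \<Longrightarrow> y < b \<Longrightarrow> isCont (psi_deriv a b) y"
  unfolding psi_deriv_def by (intro continuous_intros) auto

text \<open>The slope of \<open>psi a b\<close> at the endpoints is infinite.\<close>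

lemma psi_endpoint_slope_unbounded:
  assumes K: "0 \<le> K"
  obtains t where "0 < t" "t \<le> (b - a) / 2" "K * t < sqrt (t * (b - a - t))"
proof
  define t where "t = (b - a) / (2 * (K\<^sup>2 + 1))"
  have den: "0 < K\<^sup>2 + 1"
    by (simp add: add_nonneg_pos)
  show t0: "0 < t"
    unfolding t_def by (intro divide_pos_pos mult_pos_pos) (use ab den in auto)
  have "t \<le> (b - a) / (2 * 1)"
    unfolding t_def by (intro divide_left_mono) (use ab den in auto)
  then show th: "t \<le> (b - a) / 2"
    by simp
  have "K\<^sup>2 * t = (b - a) / 2 * (K\<^sup>2 / (K\<^sup>2 + 1))"
    unfolding t_def by (simp add: field_simps)
  also have "\<dots> < (b - a) / 2 * 1"
    using ab den by (intro mult_strict_left_mono) (simp_all add: divide_less_eq)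
  finally have "t * (K\<^sup>2 * t) < t * (b - a - t)"
    using t0 th by (intro mult_strict_left_mono) auto
  then have "(K * t)\<^sup>2 < t * (b - a - t)"
    by (simp add: power2_eq_square algebra_simps)
  then show "K * t < sqrt (t * (b - a - t))"
    using K t0 by (simp add: real_less_rsqrt)
qed

end

section \<open>Polynomial approximation\<close>

definition uniform_poly_approx ::
    "(real \<Rightarrow> real) \<Rightarrow> real \<Rightarrow> real \<Rightarrow> real set \<Rightarrow> (nat \<Rightarrow> real) \<Rightarrow> nat \<Rightarrow> bool" where
  "uniform_poly_approx F L \<delta> S q k \<longleftrightarrow>
     (\<forall>y. \<bar>y\<bar> \<le> L \<longrightarrow> \<bar>(\<Sum>i\<le>k. q i * y ^ i) - F y\<bar> \<le> \<delta> \<and> (\<Sum>i\<le>k. q i * y ^ i) \<in> S)"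

text \<open>The range of \<open>F\<close> on \<open>[-L, L]\<close> is a compact subset of \<open>(a, b)\<close>; approximate within the
  smaller of \<open>\<delta>\<close> and its distance to \<open>{a, b}\<close>.\<close>

lemma uniform_poly_approx_exists:
  fixes F :: "real \<Rightarrow> real"
  assumes cont: "continuous_on {-L..L} F" and range: "\<And>y. \<bar>y\<bar> \<le> L \<Longrightarrow> a < F y \<and> F y < b"
    and L: "0 \<le> L" and \<delta>: "0 < \<delta>"
  obtains q k where "uniform_poly_approx F L \<delta> {a..b} q k"
proof -
  have S: "compact {-L..L}" "{-L..L} \<noteq> {}"
    using L by auto
  obtain y1 where y1: "y1 \<in> {-L..L}" "\<forall>y\<in>{-L..L}. F y1 \<le> F y"
    using continuous_attains_inf[OF S cont] by blast
  obtain y2 where y2: "y2 \<in> {-L..L}" "\<forall>y\<in>{-L..L}. F y \<le> F y2"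
    using continuous_attains_sup[OF S cont] by blast
  define e where "e = min \<delta> (min (F y1 - a) (b - F y2))"
  have "0 < e"
    unfolding e_def using \<delta> range[of y1] range[of y2] y1(1) y2(1) by auto
  then obtain g where g: "real_polynomial_function g" "\<And>y. y \<in> {-L..L} \<Longrightarrow> \<bar>F y - g y\<bar> < e"
    using Stone_Weierstrass_real_polynomial_function[OF S(1) cont] by blast
  obtain q k where gq: "g = (\<lambda>y. \<Sum>i\<le>k. q i * y ^ i)"
    using g(1) unfolding real_polynomial_function_iff_sum by blast
  have "uniform_poly_approx F L \<delta> {a..b} q k"
    unfolding uniform_poly_approx_def
  proof (intro allI impI)
    fix y :: real
    assume "\<bar>y\<bar> \<le> L"
    then have y: "y \<in> {-L..L}"
      by auto
    have "e \<le> \<delta>" "e \<le> F y1 - a" "e \<le> b - F y2"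
      unfolding e_def by auto
    then show "\<bar>(\<Sum>i\<le>k. q i * y ^ i) - F y\<bar> \<le> \<delta> \<and> (\<Sum>i\<le>k. q i * y ^ i) \<in> {a..b}"
      using g(2)[OF y] y1(2) y2(2) y unfolding gq by fastforce
  qed
  then show ?thesis
    by (rule that)
qed

lemma psi_deriv_inv_poly_approx:
  assumes ab: "a < b" and \<delta>: "0 < \<delta>"
  obtains q k where "\<And>L. 0 \<le> L \<Longrightarrow> uniform_poly_approx (psi_deriv_inv a b) L \<delta> {a..b} (q L) (k L)"
proof -
  have "\<exists>q k. 0 \<le> L \<longrightarrow> uniform_poly_approx (psi_deriv_inv a b) L \<delta> {a..b} q k" for L
  proof (cases "0 \<le> L")
    case True
    obtain q k where "uniform_poly_approx (psi_deriv_inv a b) L \<delta> {a..b} q k"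
      by (rule uniform_poly_approx_exists[OF continuous_on_psi_deriv_inv psi_deriv_inv_bounds[OF ab] True \<delta>])
    then show ?thesis
      by blast
  qed simp
  then obtain q k where "\<forall>L. 0 \<le> L \<longrightarrow> uniform_poly_approx (psi_deriv_inv a b) L \<delta> {a..b} (q L) (k L)"
    by metis
  then show thesis
    using that by blast
qed

section \<open>The variational problem\<close>

definition Psi :: "real \<Rightarrow> real \<Rightarrow> nat \<Rightarrow> (nat \<Rightarrow> real) \<Rightarrow> real" where
  "Psi a b n u = (\<Sum>i<n. psi a b (u i)) / real n"

definition energy ::
    "real \<Rightarrow> real \<Rightarrow> nat \<Rightarrow> ((nat \<Rightarrow> real) \<Rightarrow> real) \<Rightarrow> (nat \<Rightarrow> real) \<Rightarrow> real \<Rightarrow> (nat \<Rightarrow> real) \<Rightarrow> real" where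
  "energy a b n N f lam u = lam * N (\<lambda>i. f i - u i) + Psi a b n u"

definition vec_box :: "real \<Rightarrow> real \<Rightarrow> nat \<Rightarrow> (nat \<Rightarrow> real) set" where
  "vec_box a b n = {u \<in> vecs n. \<forall>i<n. a \<le> u i \<and> u i \<le> b}"

definition psi_gradient :: "real \<Rightarrow> real \<Rightarrow> nat \<Rightarrow> (nat \<Rightarrow> real) \<Rightarrow> nat \<Rightarrow> real" where
  "psi_gradient a b n u = (\<lambda>j. if j < n then psi_deriv a b (u j) else 0)"

lemma vecs_psi_gradient [intro]: "psi_gradient a b n u \<in> vecs n"
  by (simp add: psi_gradient_def vecs_def)

lemma vec_box_subset_vecs: "vec_box a b n \<subseteq> vecs n"
  by (auto simp: vec_box_def)

lemma compact_vec_box: "compact (vec_box a b n)"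
proof -
  have "vec_box a b n = PiE UNIV (\<lambda>i. if i < n then {a..b} else {0})"
    by (auto simp: vec_box_def vecs_def PiE_iff split: if_splits)
  moreover have "compactin (product_topology (\<lambda>_. euclidean) UNIV)
      (PiE UNIV (\<lambda>i. if i < n then {a..b} else {0::real}))"
    by (subst compactin_PiE) auto
  ultimately show ?thesis
    by (simp add: euclidean_product_topology)
qed

lemma continuous_on_Psi: "continuous_on S (Psi a b n)"
proof -
  have "continuous_on S (\<lambda>u. (\<Sum>i<n. psi a b (u i)) * (1 / real n))"
    unfolding psi_def by (intro continuous_intros)
  then show ?thesis
    by (simp add: Psi_def[abs_def])
qed

lemma Psi_add_scaled_unit_vec:
  assumes "i < n"
  shows "Psi a b n (\<lambda>j. u j + t * unit_vec i j) = Psi a b n u + (psi a b (u i + t) - psi a b (u i)) / real n"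
proof -
  have "(\<Sum>j<n. psi a b (u j + t * unit_vec i j))
      = (\<Sum>j<n. psi a b (u j) + (if j = i then psi a b (u i + t) - psi a b (u i) else 0))"
    by (intro sum.cong) (auto simp: unit_vec_def)
  also have "\<dots> = (\<Sum>j<n. psi a b (u j)) + (psi a b (u i + t) - psi a b (u i))"
    using assms by (simp add: sum.distrib)
  finally show ?thesis
    unfolding Psi_def by (simp add: add_divide_distrib)
qed

lemma Psi_bounds:
  assumes ab: "a < b" and u: "u \<in> vec_box a b n"
  shows "- ((b - a) / 2) \<le> Psi a b n u \<and> Psi a b n u \<le> 0"
proof (cases "n = 0")
  case False
  have r: "- ((b - a) / 2) \<le> psi a b (u j) \<and> psi a b (u j) \<le> 0" if "j < n" for j
    using psi_bounds[OF ab] u that by (auto simp: vec_box_def)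
  have "real n * (- ((b - a) / 2)) \<le> (\<Sum>j<n. psi a b (u j))"
    using sum_mono[of "{..<n}" "\<lambda>_. - ((b - a) / 2)" "\<lambda>j. psi a b (u j)"] r by simp
  moreover have "(\<Sum>j<n. psi a b (u j)) \<le> 0"
    using sum_mono[of "{..<n}" "\<lambda>j. psi a b (u j)" "\<lambda>_. 0"] r by simp
  ultimately show ?thesis
    using False unfolding Psi_def by (simp add: le_divide_eq divide_le_0_iff mult.commute)
qed (use ab in \<open>simp add: Psi_def\<close>)

lemma Psi_midpoint_le:
  assumes ab: "a < b" and u: "u \<in> vec_box a b n" and w: "w \<in> vec_box a b n"
  shows "Psi a b n (\<lambda>j. (u j + w j) / 2)
    \<le> (Psi a b n u + Psi a b n w) / 2 - (l2norm n (\<lambda>j. w j - u j))\<^sup>2 / (4 * (b - a))"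
proof -
  have "psi a b ((u j + w j) / 2) \<le> (psi a b (u j) + psi a b (w j)) / 2 - (w j - u j)\<^sup>2 / (4 * (b - a))"
    if "j < n" for j
    using psi_midpoint_le[OF ab, of "u j" "w j"] u w that by (auto simp: vec_box_def power2_commute)
  then have "(\<Sum>j<n. psi a b ((u j + w j) / 2))
      \<le> (\<Sum>j<n. (psi a b (u j) + psi a b (w j)) / 2 - (w j - u j)\<^sup>2 / (4 * (b - a)))"
    by (intro sum_mono) auto
  then have "(\<Sum>j<n. psi a b ((u j + w j) / 2)) / real n
      \<le> (\<Sum>j<n. (psi a b (u j) + psi a b (w j)) / 2 - (w j - u j)\<^sup>2 / (4 * (b - a))) / real n"
    by (intro divide_right_mono) auto
  then show ?thesis
    unfolding Psi_def l2norm_sq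
    by (simp add: sum_subtractf sum_divide_distrib[symmetric] sum.distrib diff_divide_distrib
        add_divide_distrib mult_ac)
qed

lemma telescoping_small_increment:
  fixes s :: "nat \<Rightarrow> real"
  assumes "s K - s 0 < real K * \<theta>"
  obtains j where "j < K" "s (Suc j) - s j \<le> \<theta>"
proof -
  have "\<not> (\<forall>j<K. \<theta> < s (Suc j) - s j)"
  proof
    assume "\<forall>j<K. \<theta> < s (Suc j) - s j"
    then have "(\<Sum>j<K. \<theta>) \<le> (\<Sum>j<K. s (Suc j) - s j)"
      by (intro sum_mono) (simp add: less_imp_le)
    then show False
      using assms by (simp add: sum_lessThan_telescope)
  qed
  then show ?thesis
    using that by (auto simp: not_less)
qed

locale decomposition_data = vec_norm +
  fixes a b :: real and f :: "nat \<Rightarrow> real"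
  assumes ab: "a < b" and f_box: "f \<in> vec_box a b n"
begin

definition minimizer :: "real \<Rightarrow> (nat \<Rightarrow> real) \<Rightarrow> bool" where
  "minimizer lam u \<longleftrightarrow>
     u \<in> vec_box a b n \<and> (\<forall>w\<in>vec_box a b n. energy a b n N f lam u \<le> energy a b n N f lam w)"

lemma minimizer_exists: "\<exists>u. minimizer lam u"
proof -
  have "continuous_on (vec_box a b n) (\<lambda>u. N (\<lambda>i. f i - u i))"
    using continuous_on_subset[OF continuous_on_N_residual vec_box_subset_vecs] f_box
    by (auto simp: vec_box_def)
  then have "continuous_on (vec_box a b n) (energy a b n N f lam)"
    unfolding energy_def[abs_def] by (intro continuous_intros continuous_on_Psi)
  then show ?thesis
    using continuous_attains_inf[OF compact_vec_box] f_box unfolding minimizer_def by blast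
qed

lemma minimizer_in_box: "minimizer lam u \<Longrightarrow> u \<in> vec_box a b n"
  by (simp add: minimizer_def)

lemma minimizer_vecs: "minimizer lam u \<Longrightarrow> u \<in> vecs n"
  by (simp add: minimizer_def vec_box_def)

lemma minimizer_Psi_decrease_le:
  assumes lam: "0 \<le> lam" and u: "minimizer lam u" and d: "d \<in> vecs n"
    and ud: "(\<lambda>i. u i + d i) \<in> vec_box a b n"
  shows "Psi a b n u - Psi a b n (\<lambda>i. u i + d i) \<le> lam * N d"
proof -
  have fu: "(\<lambda>i. f i - u i) \<in> vecs n"
    using f_box minimizer_vecs[OF u] by (auto simp: vec_box_def)
  have "N (\<lambda>i. f i - (u i + d i)) = N (\<lambda>i. (f i - u i) - d i)"
    by (simp add: algebra_simps)
  also have "\<dots> \<le> N (\<lambda>i. f i - u i) + N d"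
    using N_diff_le[OF fu d] .
  finally have "lam * N (\<lambda>i. f i - (u i + d i)) \<le> lam * (N (\<lambda>i. f i - u i) + N d)"
    using lam by (rule mult_left_mono)
  moreover have "energy a b n N f lam u \<le> energy a b n N f lam (\<lambda>i. u i + d i)"
    using u ud by (auto simp: minimizer_def)
  ultimately show ?thesis
    by (simp add: energy_def algebra_simps)
qed

lemma minimizer_coordinate_step:
  assumes lam: "0 \<le> lam" and u: "minimizer lam u" and i: "i < n"
    and s: "a \<le> u i + s" "u i + s \<le> b"
  shows "psi a b (u i) - psi a b (u i + s) \<le> real n * lam * N (unit_vec i) * \<bar>s\<bar>"
proof -
  define d where "d = (\<lambda>j. s * unit_vec i j)"
  have d: "d \<in> vecs n"
    unfolding d_def using i by auto
  have "(\<lambda>j. u j + d j) \<in> vec_box a b n"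
    using minimizer_in_box[OF u] s d unfolding d_def by (auto simp: vec_box_def unit_vec_def vecs_def)
  then have "Psi a b n u - Psi a b n (\<lambda>j. u j + d j) \<le> lam * N d"
    by (rule minimizer_Psi_decrease_le[OF lam u d])
  moreover have "Psi a b n (\<lambda>j. u j + d j) = Psi a b n u + (psi a b (u i + s) - psi a b (u i)) / real n"
    unfolding d_def by (rule Psi_add_scaled_unit_vec[OF i])
  moreover have "N d = \<bar>s\<bar> * N (unit_vec i)"
    unfolding d_def using N_scale[OF vecs_unit_vec[OF i]] .
  ultimately have "(psi a b (u i) - psi a b (u i + s)) / real n \<le> lam * (\<bar>s\<bar> * N (unit_vec i))"
    by (simp add: diff_divide_distrib)
  then show ?thesis
    using i by (simp add: divide_le_eq mult_ac)
qed

text \<open>Since \<open>psi\<close> has infinite slope at \<open>a\<close> and \<open>b\<close>, moving a coordinate off an endpoint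
  would lower the energy.\<close>

lemma minimizer_interior:
  assumes lam: "0 \<le> lam" and u: "minimizer lam u" and i: "i < n"
  shows "a < u i \<and> u i < b"
proof -
  define K where "K = real n * lam * N (unit_vec i)"
  have "0 \<le> K"
    unfolding K_def using lam N_unit_vec_pos[OF i] by simp
  then obtain t where t: "0 < t" "t \<le> (b - a) / 2" "K * t < sqrt (t * (b - a - t))"
    using psi_endpoint_slope_unbounded[OF ab] by blast
  have ui: "a \<le> u i" "u i \<le> b"
    using minimizer_in_box[OF u] i by (auto simp: vec_box_def)
  have "u i \<noteq> a"
  proof
    assume ua: "u i = a"
    have "psi a b (u i) - psi a b (u i + t) \<le> K * \<bar>t\<bar>"
      unfolding K_def using minimizer_coordinate_step[OF lam u i, of t] ua t ab by simp
    moreover have "psi a b (u i) - psi a b (u i + t) = sqrt (t * (b - a - t))"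
      unfolding ua psi_def by (simp add: algebra_simps)
    ultimately show False
      using t by simp
  qed
  moreover have "u i \<noteq> b"
  proof
    assume ub: "u i = b"
    have "psi a b (u i) - psi a b (u i + - t) \<le> K * \<bar>- t\<bar>"
      unfolding K_def using minimizer_coordinate_step[OF lam u i, of "- t"] ub t ab by simp
    moreover have "psi a b (u i) - psi a b (u i + - t) = sqrt (t * (b - a - t))"
      unfolding ub psi_def by (simp add: algebra_simps)
    ultimately show False
      using t by simp
  qed
  ultimately show ?thesis
    using ui by auto
qed

lemma minimizer_difference_quotient_ge:
  assumes lam: "0 \<le> lam" and u: "minimizer lam u" and d: "d \<in> vecs n" and t: "0 < t"
    and inside: "\<forall>j<n. a < u j + t * d j \<and> u j + t * d j < b"
  shows "- (lam * N d) \<le> (\<Sum>j<n. psi_deriv a b (u j + t * d j) * d j) / real n"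
proof -
  have "(\<lambda>j. u j + t * d j) \<in> vec_box a b n"
    using inside minimizer_vecs[OF u] d by (auto simp: vec_box_def vecs_def less_imp_le)
  then have "Psi a b n u - Psi a b n (\<lambda>j. u j + t * d j) \<le> lam * N (\<lambda>j. t * d j)"
    using minimizer_Psi_decrease_le[OF lam u, of "\<lambda>j. t * d j"] d by auto
  also have "\<dots> = t * (lam * N d)"
    using N_scale[OF d, of t] t by simp
  finally have decrease: "Psi a b n u - Psi a b n (\<lambda>j. u j + t * d j) \<le> t * (lam * N d)" .
  have "- (t * (psi_deriv a b (u j + t * d j) * d j)) \<le> psi a b (u j) - psi a b (u j + t * d j)"
    if j: "j < n" for j
    using psi_tangent_le[OF ab, of "u j" "u j + t * d j"] minimizer_interior[OF lam u j] inside j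
    by (simp add: algebra_simps)
  then have "(\<Sum>j<n. - (t * (psi_deriv a b (u j + t * d j) * d j)))
      \<le> (\<Sum>j<n. psi a b (u j) - psi a b (u j + t * d j))"
    by (intro sum_mono) auto
  then have "- (t * (\<Sum>j<n. psi_deriv a b (u j + t * d j) * d j))
      \<le> (\<Sum>j<n. psi a b (u j)) - (\<Sum>j<n. psi a b (u j + t * d j))"
    by (simp add: sum_subtractf sum_distrib_left sum_negf)
  then have "- (t * (\<Sum>j<n. psi_deriv a b (u j + t * d j) * d j)) / real n
      \<le> ((\<Sum>j<n. psi a b (u j)) - (\<Sum>j<n. psi a b (u j + t * d j))) / real n"
    by (rule divide_right_mono) simp
  then have "- (t * ((\<Sum>j<n. psi_deriv a b (u j + t * d j) * d j) / real n))
      \<le> Psi a b n u - Psi a b n (\<lambda>j. u j + t * d j)"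
    unfolding Psi_def by (simp add: diff_divide_distrib)
  with decrease have "t * (- (lam * N d)) \<le> t * ((\<Sum>j<n. psi_deriv a b (u j + t * d j) * d j) / real n)"
    by simp
  then show ?thesis
    by (rule mult_left_le_imp_le) (use t in simp)
qed

text \<open>First-order optimality, obtained by letting \<open>t \<rightarrow> 0\<^sup>+\<close> in the difference quotient.\<close>

lemma minimizer_gradient_ge:
  assumes lam: "0 \<le> lam" and u: "minimizer lam u" and d: "d \<in> vecs n"
  shows "- (lam * N d) \<le> ip n d (psi_gradient a b n u)"
proof -
  define S where "S = (\<lambda>t. (\<Sum>j<n. psi_deriv a b (u j + t * d j) * d j) / real n)"
  have coord: "((\<lambda>t. u j + t * d j) \<longlongrightarrow> u j) (at_right 0)" for j
  proof -
    have "((\<lambda>t. u j + t * d j) \<longlongrightarrow> u j + 0 * d j) (at_right 0)"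
      by (intro tendsto_intros)
    then show ?thesis
      by simp
  qed
  have interior: "a < u j" "u j < b" if "j \<in> {..<n}" for j
    using minimizer_interior[OF lam u] that by auto
  have "((\<lambda>t. \<Sum>j<n. psi_deriv a b (u j + t * d j) * d j) \<longlongrightarrow> (\<Sum>j<n. psi_deriv a b (u j) * d j))
      (at_right 0)"
  proof (rule tendsto_sum)
    fix j
    assume "j \<in> {..<n}"
    then have "isCont (psi_deriv a b) (u j)"
      using isCont_psi_deriv[OF ab] interior by blast
    then show "((\<lambda>t. psi_deriv a b (u j + t * d j) * d j) \<longlongrightarrow> psi_deriv a b (u j) * d j) (at_right 0)"
      by (intro tendsto_mult_right isCont_tendsto_compose[OF _ coord])
  qed
  from tendsto_mult_right[OF this, of "1 / real n"] have "(S \<longlongrightarrow> S 0) (at_right 0)"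
    by (simp add: S_def)
  moreover have "\<forall>\<^sub>F t in at_right 0. - (lam * N d) \<le> S t"
  proof -
    have "\<forall>\<^sub>F t in at_right 0. a < u j + t * d j \<and> u j + t * d j < b" if "j \<in> {..<n}" for j
      using order_tendstoD(1)[OF coord interior(1)[OF that]] order_tendstoD(2)[OF coord interior(2)[OF that]]
      by (rule eventually_conj)
    then have "\<forall>\<^sub>F t in at_right 0. \<forall>j\<in>{..<n}. a < u j + t * d j \<and> u j + t * d j < b"
      by (intro eventually_ball_finite) auto
    with eventually_at_right_less
    have "\<forall>\<^sub>F t in at_right 0. 0 < t \<and> (\<forall>j\<in>{..<n}. a < u j + t * d j \<and> u j + t * d j < b)"
      by (rule eventually_conj)
    then show ?thesis
    proof eventually_elim
      case (elim t)
      then show ?case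
        using minimizer_difference_quotient_ge[OF lam u d, of t] by (simp add: S_def)
    qed
  qed
  ultimately have "- (lam * N d) \<le> S 0"
    by (rule tendsto_lowerbound) simp
  then show ?thesis
    unfolding S_def ip_def psi_gradient_def by (simp add: mult.commute)
qed

lemma minimizer_gradient_le:
  assumes lam: "0 \<le> lam" and u: "minimizer lam u" and d: "d \<in> vecs n"
  shows "ip n d (psi_gradient a b n u) \<le> lam * N d"
proof -
  have "- (lam * N (\<lambda>i. - d i)) \<le> ip n (\<lambda>i. - d i) (psi_gradient a b n u)"
    using minimizer_gradient_ge[OF lam u] d by auto
  then show ?thesis
    using N_minus[OF d] unfolding ip_def by (simp add: sum_negf)
qed

lemma dual_norm_psi_gradient_le:
  assumes lam: "0 \<le> lam" and u: "minimizer lam u"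
  shows "dual_norm n N (psi_gradient a b n u) \<le> lam"
  unfolding dual_norm_def
proof (rule cSup_least)
  show "{ip n d (psi_gradient a b n u) |d. d \<in> vecs n \<and> N d \<le> 1} \<noteq> {}"
    using vecs_zero N_zero by fastforce
next
  fix x
  assume "x \<in> {ip n d (psi_gradient a b n u) |d. d \<in> vecs n \<and> N d \<le> 1}"
  then obtain d where d: "d \<in> vecs n" "N d \<le> 1" and x: "x = ip n d (psi_gradient a b n u)"
    by blast
  have "x \<le> lam * N d"
    using minimizer_gradient_le[OF lam u d(1)] x by simp
  also have "\<dots> \<le> lam"
    using d(2) lam mult_left_mono[of "N d" 1 lam] by simp
  finally show "x \<le> lam" .
qed

lemma psi_deriv_inv_psi_gradient:
  assumes "0 \<le> lam" "minimizer lam u" "j < n"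
  shows "psi_deriv_inv a b (psi_gradient a b n u j) = u j"
  using psi_deriv_inv_psi_deriv[OF ab] minimizer_interior[OF assms] assms(3)
  by (simp add: psi_gradient_def)

lemma minimizer_residual_le:
  assumes lam: "0 < lam" and u: "minimizer lam u"
  shows "N (\<lambda>i. f i - u i) \<le> (b - a) / 2 / lam"
proof -
  have "energy a b n N f lam u \<le> energy a b n N f lam f"
    using u f_box by (simp add: minimizer_def)
  then have "lam * N (\<lambda>i. f i - u i) \<le> Psi a b n f - Psi a b n u"
    by (simp add: energy_def)
  also have "\<dots> \<le> (b - a) / 2"
    using Psi_bounds[OF ab f_box] Psi_bounds[OF ab minimizer_in_box[OF u]] by linarith
  finally show ?thesis
    using lam by (simp add: le_divide_eq mult.commute)
qed

lemma minimizer_residual_antimono: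
  assumes lam: "lam < mu" and u: "minimizer lam u" and w: "minimizer mu w"
  shows "N (\<lambda>j. f j - w j) \<le> N (\<lambda>j. f j - u j)"
proof -
  have "energy a b n N f lam u \<le> energy a b n N f lam w" "energy a b n N f mu w \<le> energy a b n N f mu u"
    using u w by (simp_all add: minimizer_def)
  then have "(mu - lam) * N (\<lambda>j. f j - w j) \<le> (mu - lam) * N (\<lambda>j. f j - u j)"
    unfolding energy_def by (simp add: algebra_simps)
  then show ?thesis
    using lam by simp
qed

lemma energy_midpoint_le:
  assumes lam: "0 \<le> lam" and u: "u \<in> vec_box a b n" and w: "w \<in> vec_box a b n"
  shows "energy a b n N f lam (\<lambda>j. (u j + w j) / 2)
    \<le> (energy a b n N f lam u + energy a b n N f lam w) / 2 - (l2norm n (\<lambda>j. w j - u j))\<^sup>2 / (4 * (b - a))"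
proof -
  have fu: "(\<lambda>j. f j - u j) \<in> vecs n" and fw: "(\<lambda>j. f j - w j) \<in> vecs n"
    using f_box u w by (auto simp: vec_box_def)
  have "N (\<lambda>j. f j - (u j + w j) / 2) = N (\<lambda>j. (1/2) * (f j - u j) + (1/2) * (f j - w j))"
    by (rule arg_cong[where f = N]) (auto simp: fun_eq_iff field_simps)
  also have "\<dots> \<le> (1/2) * N (\<lambda>j. f j - u j) + (1/2) * N (\<lambda>j. f j - w j)"
    by (rule N_convex_comb[OF fu fw]) auto
  finally have "lam * N (\<lambda>j. f j - (u j + w j) / 2)
      \<le> lam * ((1/2) * N (\<lambda>j. f j - u j) + (1/2) * N (\<lambda>j. f j - w j))"
    using lam by (rule mult_left_mono)
  then show ?thesis
    using Psi_midpoint_le[OF ab u w] unfolding energy_def by (simp add: algebra_simps)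
qed

text \<open>Test the minimality of \<open>u\<close> against the midpoint of \<open>u\<close> and \<open>w\<close>.\<close>

lemma minimizer_l2norm_sq_le:
  assumes lam: "0 \<le> lam" "lam < mu" and u: "minimizer lam u" and w: "minimizer mu w"
  shows "(l2norm n (\<lambda>j. w j - u j))\<^sup>2 \<le> 2 * (b - a) * (Psi a b n w - Psi a b n u)"
proof -
  have uB: "u \<in> vec_box a b n" and wB: "w \<in> vec_box a b n"
    using u w by (simp_all add: minimizer_def)
  have "(\<lambda>j. (u j + w j) / 2) \<in> vec_box a b n"
    using uB wB by (fastforce simp: vec_box_def vecs_def)
  then have "energy a b n N f lam u \<le> energy a b n N f lam (\<lambda>j. (u j + w j) / 2)"
    using u by (simp add: minimizer_def)
  then have "(l2norm n (\<lambda>j. w j - u j))\<^sup>2 / (4 * (b - a))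
      \<le> (energy a b n N f lam w - energy a b n N f lam u) / 2"
    using energy_midpoint_le[OF lam(1) uB wB] by (simp only: add_divide_distrib diff_divide_distrib)
  also have "\<dots> \<le> (Psi a b n w - Psi a b n u) / 2"
    using mult_left_mono[OF minimizer_residual_antimono[OF lam(2) u w] lam(1)]
    unfolding energy_def by simp
  finally show ?thesis
    using ab by (simp add: divide_le_eq field_simps)
qed

lemma minimizer_small_increment:
  assumes U: "\<And>j. minimizer (lam j) (U j)" and K: "(b - a) / 2 < real K * \<theta>"
  obtains j where "j < K" "Psi a b n (U (Suc j)) - Psi a b n (U j) \<le> \<theta>"
proof (rule telescoping_small_increment)
  show "Psi a b n (U K) - Psi a b n (U 0) < real K * \<theta>"
    using Psi_bounds[OF ab minimizer_in_box[OF U]] K by (smt (verit))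
qed

text \<open>The polynomial in the gradient approximates the minimiser because \<open>psi_deriv_inv\<close> inverts
  \<open>psi_deriv\<close> and the coordinates of the gradient lie in \<open>[-lam, lam]\<close>.\<close>

lemma vec_poly_psi_gradient:
  assumes alg: "is_algebra_norm_on n (dual_norm n N)" and lam: "0 \<le> lam" and u: "minimizer lam u"
    and approx: "uniform_poly_approx (psi_deriv_inv a b) lam \<delta> {a..b} q k"
  defines "v \<equiv> vec_poly n q k (psi_gradient a b n u)"
  shows "v \<in> vec_box a b n" and "\<forall>i<n. \<bar>v i - u i\<bar> \<le> \<delta>"
    and "dual_norm n N v \<le> (\<Sum>l\<le>k. \<bar>q l\<bar> * lam ^ l)"
proof -
  interpret M: algebra_norm n "dual_norm n N"
    using alg by unfold_locales
  define g where "g = psi_gradient a b n u"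
  have g: "g \<in> vecs n" and Mg: "dual_norm n N g \<le> lam"
    unfolding g_def using dual_norm_psi_gradient_le[OF lam u] by auto
  have v: "\<bar>v i - u i\<bar> \<le> \<delta> \<and> a \<le> v i \<and> v i \<le> b" if i: "i < n" for i
  proof -
    have "\<bar>g i\<bar> \<le> lam"
      using M.abs_coordinate_le[OF g i] Mg by simp
    moreover have "psi_deriv_inv a b (g i) = u i"
      unfolding g_def by (rule psi_deriv_inv_psi_gradient[OF lam u i])
    ultimately show ?thesis
      using approx unfolding uniform_poly_approx_def v_def g_def[symmetric] vec_poly_apply[OF i] by auto
  qed
  then show "v \<in> vec_box a b n" and "\<forall>i<n. \<bar>v i - u i\<bar> \<le> \<delta>"
    unfolding vec_box_def v_def by auto
  have "dual_norm n N v \<le> (\<Sum>l\<le>k. \<bar>q l\<bar> * dual_norm n N g ^ l)"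
    unfolding v_def g_def[symmetric] by (rule M.N_vec_poly_le[OF g])
  also have "\<dots> \<le> (\<Sum>l\<le>k. \<bar>q l\<bar> * lam ^ l)"
    using Mg M.N_nonneg[OF g] by (intro sum_mono mult_left_mono power_mono) auto
  finally show "dual_norm n N v \<le> (\<Sum>l\<le>k. \<bar>q l\<bar> * lam ^ l)" .
qed

lemma minimizer_l2norm_le:
  assumes lam: "0 \<le> lam" "lam < mu" and u: "minimizer lam u" and w: "minimizer mu w"
    and small: "Psi a b n w - Psi a b n u \<le> \<epsilon>\<^sup>2 / (8 * (b - a))" and eps: "0 < \<epsilon>"
    and v: "\<forall>i<n. \<bar>v i - u i\<bar> \<le> \<epsilon> / 2"
  shows "l2norm n (\<lambda>i. w i - v i) \<le> \<epsilon>"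
proof -
  have "(l2norm n (\<lambda>i. w i - u i))\<^sup>2 \<le> 2 * (b - a) * (\<epsilon>\<^sup>2 / (8 * (b - a)))"
    using minimizer_l2norm_sq_le[OF lam u w] small ab by (smt (verit) mult_left_mono)
  then have "(l2norm n (\<lambda>i. w i - v i))\<^sup>2 \<le> 2 * (2 * (b - a) * (\<epsilon>\<^sup>2 / (8 * (b - a)))) + 2 * (\<epsilon> / 2)\<^sup>2"
    using l2norm_sq_diff_le[OF v, of w] by linarith
  also have "\<dots> = \<epsilon>\<^sup>2"
    using ab by (simp add: field_simps power2_eq_square)
  finally show ?thesis
    using eps l2norm_nonneg by (simp add: power2_le_iff_abs_le)
qed

text \<open>The decomposition is read off minimisers \<open>u\<close>, \<open>w\<close> at scales \<open>lam < mu\<close>: \<open>f1\<close> is a polynomial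
  in the gradient of \<open>u\<close>, \<open>f2 = f - w\<close> and \<open>f3 = w - f1\<close>.\<close>

lemma decomposition_from_small_increment:
  assumes alg: "is_algebra_norm_on n (dual_norm n N)"
    and lam: "0 \<le> lam" "lam < mu" and u: "minimizer lam u" and w: "minimizer mu w"
    and small: "Psi a b n w - Psi a b n u \<le> \<epsilon>\<^sup>2 / (8 * (b - a))"
    and approx: "uniform_poly_approx (psi_deriv_inv a b) lam (\<epsilon> / 2) {a..b} q k"
    and eps: "0 < \<epsilon>"
  obtains f1 f2 f3 where "f1 \<in> vec_box a b n" "f2 \<in> vecs n" "f3 \<in> vecs n"
    "f = (\<lambda>i. f1 i + f2 i + f3 i)" "dual_norm n N f1 \<le> (\<Sum>l\<le>k. \<bar>q l\<bar> * lam ^ l)"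
    "N f2 \<le> (b - a) / 2 / mu" "l2norm n f3 \<le> \<epsilon>" "(\<lambda>i. f1 i + f3 i) \<in> vec_box a b n"
proof -
  define f1 where "f1 = vec_poly n q k (psi_gradient a b n u)"
  note f1 = vec_poly_psi_gradient[OF alg lam(1) u approx, folded f1_def]
  have "N (\<lambda>i. f i - w i) \<le> (b - a) / 2 / mu"
    using lam by (intro minimizer_residual_le[OF _ w]) simp
  moreover have "l2norm n (\<lambda>i. w i - f1 i) \<le> \<epsilon>"
    by (rule minimizer_l2norm_le[OF lam u w small eps f1(2)])
  moreover have "(\<lambda>i. f i - w i) \<in> vecs n" "(\<lambda>i. w i - f1 i) \<in> vecs n"
    using f_box minimizer_vecs[OF w] vecs_vec_poly unfolding f1_def vec_box_def by auto
  moreover have "(\<lambda>i. f1 i + (w i - f1 i)) \<in> vec_box a b n"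
    using minimizer_in_box[OF w] by simp
  ultimately show thesis
    using that[of f1 "\<lambda>i. f i - w i" "\<lambda>i. w i - f1 i"] f1(1,3) by simp
qed

lemma decomposition_at_some_scale:
  assumes alg: "is_algebra_norm_on n (dual_norm n N)"
    and lam: "\<And>j. 0 \<le> lam j" "\<And>j. lam j < lam (Suc j)"
    and approx: "\<And>j. uniform_poly_approx (psi_deriv_inv a b) (lam j) (\<epsilon> / 2) {a..b} (q j) (k j)"
    and K: "(b - a) / 2 < real K * (\<epsilon>\<^sup>2 / (8 * (b - a)))" and eps: "0 < \<epsilon>"
  obtains j f1 f2 f3 where "j < K" "f1 \<in> vec_box a b n" "f2 \<in> vecs n" "f3 \<in> vecs n"
    "f = (\<lambda>i. f1 i + f2 i + f3 i)" "dual_norm n N f1 \<le> (\<Sum>l\<le>k j. \<bar>q j l\<bar> * lam j ^ l)"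
    "N f2 \<le> (b - a) / 2 / lam (Suc j)" "l2norm n f3 \<le> \<epsilon>" "(\<lambda>i. f1 i + f3 i) \<in> vec_box a b n"
proof -
  have "\<forall>j. \<exists>u. minimizer (lam j) u"
    using minimizer_exists by blast
  then obtain U where U: "\<And>j. minimizer (lam j) (U j)"
    by metis
  obtain j where "j < K" and small: "Psi a b n (U (Suc j)) - Psi a b n (U j) \<le> \<epsilon>\<^sup>2 / (8 * (b - a))"
    by (rule minimizer_small_increment[OF U K])
  from that[OF \<open>j < K\<close>] show thesis
    by (rule decomposition_from_small_increment[OF alg lam U U small approx eps])
qed

end

section \<open>Choice of scales\<close>

lemma scale_sequence_exists:
  fixes c :: real and h :: "real \<Rightarrow> real"
  assumes "\<And>x. 1 \<le> x \<Longrightarrow> 0 < h x"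
  obtains lam :: "nat \<Rightarrow> real"
  where "\<And>j. 1 \<le> lam j" "\<And>j. lam j < lam (Suc j)" "\<And>j. c \<le> lam (Suc j) * h (lam j)"
proof -
  define lam where "lam = rec_nat 1 (\<lambda>_ l. max (l + 1) (c / h l))"
  have ge_1: "1 \<le> lam j" for j
    by (induction j) (simp_all add: lam_def)
  moreover have "lam j < lam (Suc j)" for j
    by (simp add: lam_def)
  moreover have "c \<le> lam (Suc j) * h (lam j)" for j
  proof -
    have "c / h (lam j) \<le> lam (Suc j)"
      by (simp add: lam_def)
    then show ?thesis
      using assms[OF ge_1] by (simp add: pos_divide_le_eq)
  qed
  ultimately show thesis
    by (rule that)
qed

text \<open>\<open>D L\<close> bounds \<open>dual_norm n N f1\<close> when \<open>f1\<close> is built at scale \<open>L\<close>; the scales are chosen so that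
  the residual bound \<open>(b - a) / (2 * mu)\<close> at the following scale \<open>mu\<close> is at most \<open>\<eta> (D L)\<close>.\<close>

theorem theorem5p1:
  fixes a b \<epsilon> :: real and \<eta> :: "real \<Rightarrow> real"
  assumes "a < b"
    and "\<forall>x\<ge>0. \<eta> x > 0"
    and "\<forall>x y. 0 \<le> x \<longrightarrow> x \<le> y \<longrightarrow> \<eta> y \<le> \<eta> x"
    and "\<epsilon> > 0"
  shows "\<exists>C0. \<forall>n N f. 0 < n \<longrightarrow> is_norm_on n N \<longrightarrow>
           is_algebra_norm_on n (dual_norm n N) \<longrightarrow>
           f \<in> vecs n \<longrightarrow> (\<forall>i<n. a \<le> f i \<and> f i \<le> b) \<longrightarrow>
           (\<exists>f1 f2 f3. f1 \<in> vecs n \<and> f2 \<in> vecs n \<and> f3 \<in> vecs n \<and>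
              f = (\<lambda>i. f1 i + f2 i + f3 i) \<and>
              dual_norm n N f1 \<le> C0 \<and>
              N f2 \<le> \<eta> (dual_norm n N f1) \<and>
              l2norm n f3 \<le> \<epsilon> \<and>
              (\<forall>i<n. a \<le> f1 i \<and> f1 i \<le> b) \<and>
              (\<forall>i<n. a \<le> f1 i + f3 i \<and> f1 i + f3 i \<le> b))"
proof -
  note ab = \<open>a < b\<close> and eps = \<open>\<epsilon> > 0\<close>
  obtain q k
    where approx: "\<And>L. 0 \<le> L \<Longrightarrow> uniform_poly_approx (psi_deriv_inv a b) L (\<epsilon> / 2) {a..b} (q L) (k L)"
    using psi_deriv_inv_poly_approx[OF ab, of "\<epsilon> / 2"] eps by auto
  define D where "D L = (\<Sum>i\<le>k L. \<bar>q L i\<bar> * L ^ i)" for L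
  have D_nonneg: "0 \<le> D L" if "0 \<le> L" for L
    unfolding D_def using that by (intro sum_nonneg) simp
  obtain lam where lam: "\<And>j. 1 \<le> lam j" "\<And>j. lam j < lam (Suc j)"
    "\<And>j. (b - a) / 2 \<le> lam (Suc j) * \<eta> (D (lam j))"
    by (rule scale_sequence_exists[where c = "(b - a) / 2" and h = "\<lambda>x. \<eta> (D x)"]) (use assms(2) D_nonneg in auto)
  have lam_nonneg: "0 \<le> lam j" for j
    using lam(1)[of j] by simp
  have "0 < \<epsilon>\<^sup>2 / (8 * (b - a))"
    using ab eps by simp
  then obtain K :: nat where K: "(b - a) / 2 < real K * (\<epsilon>\<^sup>2 / (8 * (b - a)))"
    using ex_less_of_nat_mult by blast
  show ?thesis
  proof (intro exI[of _ "\<Sum>j\<le>K. D (lam j)"] allI impI, goal_cases)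
    case (1 n N f)
    then have alg: "is_algebra_norm_on n (dual_norm n N)"
      by blast
    interpret decomposition_data n N a b f
      using 1 ab by unfold_locales (simp_all add: vec_box_def)
    interpret M: algebra_norm n "dual_norm n N"
      using alg by unfold_locales
    obtain j f1 f2 f3 where "j < K" and f: "f1 \<in> vec_box a b n" "f2 \<in> vecs n" "f3 \<in> vecs n"
      "f = (\<lambda>i. f1 i + f2 i + f3 i)" and Mf1: "dual_norm n N f1 \<le> D (lam j)"
      and Nf2: "N f2 \<le> (b - a) / 2 / lam (Suc j)" and f3: "l2norm n f3 \<le> \<epsilon>" "(\<lambda>i. f1 i + f3 i) \<in> vec_box a b n"
      by (rule decomposition_at_some_scale[where q = "\<lambda>j. q (lam j)" and k = "\<lambda>j. k (lam j)",
            OF alg lam_nonneg lam(2) approx[OF lam_nonneg] K eps, folded D_def])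
    have "dual_norm n N f1 \<le> (\<Sum>j\<le>K. D (lam j))"
      using \<open>j < K\<close> D_nonneg lam_nonneg by (intro order_trans[OF Mf1] member_le_sum) auto
    moreover have "N f2 \<le> \<eta> (dual_norm n N f1)"
    proof -
      have "(b - a) / 2 / lam (Suc j) \<le> \<eta> (D (lam j))"
        using lam(3)[of j] lam(1)[of "Suc j"] by (simp add: pos_divide_le_eq mult_ac)
      also have "\<dots> \<le> \<eta> (dual_norm n N f1)"
        using assms(3) M.N_nonneg f(1) vec_box_subset_vecs Mf1 by blast
      finally show ?thesis
        using Nf2 by simp
    qed
    moreover have "f1 \<in> vecs n" "\<forall>i<n. a \<le> f1 i \<and> f1 i \<le> b" "\<forall>i<n. a \<le> f1 i + f3 i \<and> f1 i + f3 i \<le> b"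
      using f(1) f3(2) by (simp_all add: vec_box_def)
    ultimately show ?case
      using f f3 by blast
  qed
qed

end
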